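(* Let $f:X\to\mathcal G$ be a convex function and $x_0\in\operatorname{dom} f$. Suppose that either (i) $x_0$ solves the set-valued Stampacchia inequality: $f(x_0)=Z$, or for all $x\in\operatorname{dom} f$ with $f(x)\neq f(x_0)$ one has $0\notin f'(x_0,x-x_0)$; or (ii) for all $x\in\operatorname{dom} f$ with $f(x_0)\ne f(x)$ there exists $z^*\in C^-\setminus\{0\}$ such that $-\infty=\varphi_{f,z^*}(x_0)<\varphi_{f,z^*}(x)$ or $0<\varphi'_{f,z^*}(x_0,x-x_0)$. Then $x_0$ is a minimizer of $f$, i.e. $f(x_0)\in\operatorname{Min} f[X]$: for every $x\in X$, $f(x)\supseteq f(x_0)$ implies $f(x)=f(x_0)$.
   Context: $X$ is a real linear space and $Z$ a real locally convex Hausdorff space with topological dual $Z^*$. $C\subseteq Z$ is a closed convex cone with $0\in C$ such that $C^-=\{z^*\in Z^*: z^*(c)\le 0\ \forall c\in C\}$ satisfies $C^-\setminus\{0\}\ne\emptyset$. Let $\mathcal G=\{A\subseteq Z: A=\operatorname{cl}\operatorname{co}(A+C)\}$. For $A,B\in\mathcal G$: $A\oplus B=\operatorname{cl}\{a+b\}$, $tA=\{ta\}$ for $t>0$, $A\ominus B=\{z\in Z: B+\{z\}\subseteq A\}$. $f:X\to\mathcal G$ is convex if $f(tx_1+(1-t)x_2)\supseteq tf(x_1)\oplus(1-t)f(x_2)$ for $t\in(0,1)$; $\operatorname{dom}f=\{x:f(x)\ne\emptyset\}$. $f'(x,u)=\bigcap_{t_0>0}\operatorname{cl}\operatorname{co}\bigcup_{0<t<t_0}\frac1t\big(f(x+tu)\ominus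 f(x)\big)$. On $\overline{\mathbb R}$ use inf-addition $\dot+$ ($(-\infty)\dot+(+\infty)=+\infty$) and $r\ominus s=\inf\{t\in\mathbb R:r\le s\dot+t\}$ ($\inf\emptyset=+\infty$). $\varphi_{f,z^*}(x)=\inf\{-z^*(z):z\in f(x)\}$ ($+\infty$ if $f(x)=\emptyset$), $\varphi'_{f,z^*}(x,u)=\inf_{t>0}\frac1t\big(\varphi_{f,z^*}(x+tu)\ominus\varphi_{f,z^*}(x)\big)$. *)

theory Defs
  imports "HOL-Analysis.Analysis"
begin

text \<open>Z is a real locally convex Hausdorff topological vector space.
  Hausdorffness is given by the type class t2_space; the remaining axioms are
  stated by the following predicate on the type.\<close>
definition lc_tvs :: "('z::{real_vector,t2_space}) itself \<Rightarrow> bool" where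
  "lc_tvs _ \<longleftrightarrow>
     continuous_on UNIV (\<lambda>p::'z \<times> 'z. fst p + snd p) \<and>
     continuous_on UNIV (\<lambda>p::real \<times> 'z. fst p *\<^sub>R snd p) \<and>
     (\<forall>U::'z set. open U \<and> 0 \<in> U \<longrightarrow> (\<exists>V. open V \<and> convex V \<and> 0 \<in> V \<and> V \<subseteq> U))"

definition topdual :: "('z::{real_vector,topological_space} \<Rightarrow> real) set" where
  "topdual = {zs. linear zs \<and> continuous_on UNIV zs}"

definition negpolar :: "'z::{real_vector,topological_space} set \<Rightarrow> ('z \<Rightarrow> real) set" where
  "negpolar C = {zs \<in> topdual. \<forall>c\<in>C. zs c \<le> 0}"

definition setplus :: "'z::real_vector set \<Rightarrow> 'z set \<Rightarrow> 'z set" where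
  "setplus A B = {a + b | a b. a \<in> A \<and> b \<in> B}"

definition Gspace :: "'z::{real_vector,topological_space} set \<Rightarrow> 'z set set" where
  "Gspace C = {A. A = closure (convex hull (setplus A C))}"

definition Gplus :: "'z::{real_vector,topological_space} set \<Rightarrow> 'z set \<Rightarrow> 'z set" where
  "Gplus A B = closure (setplus A B)"

definition Gscale :: "real \<Rightarrow> 'z::real_vector set \<Rightarrow> 'z set" where
  "Gscale t A = (\<lambda>a. t *\<^sub>R a) ` A"

definition Gminus :: "'z::real_vector set \<Rightarrow> 'z set \<Rightarrow> 'z set" where
  "Gminus A B = {z. (\<lambda>b. b + z) ` B \<subseteq> A}"

definition sv_convex :: "('x::real_vector \<Rightarrow> 'z::{real_vector,topological_space} set) \<Rightarrow> bool" where
  "sv_convex f \<longleftrightarrow> (\<forall>x1 x2 t. 0 < t \<and> t < 1 \<longrightarrow>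
      Gplus (Gscale t (f x1)) (Gscale (1 - t) (f x2)) \<subseteq> f (t *\<^sub>R x1 + (1 - t) *\<^sub>R x2))"

definition sv_dom :: "('x \<Rightarrow> 'z set) \<Rightarrow> 'x set" where
  "sv_dom f = {x. f x \<noteq> {}}"

definition sv_dir_deriv ::
  "('x::real_vector \<Rightarrow> 'z::{real_vector,topological_space} set) \<Rightarrow> 'x \<Rightarrow> 'x \<Rightarrow> 'z set" where
  "sv_dir_deriv f x u = (\<Inter>t0\<in>{0<..}.
      closure (convex hull (\<Union>t\<in>{0<..<t0}. Gscale (1 / t) (Gminus (f (x + t *\<^sub>R u)) (f x)))))"

text \<open>Inf-addition on the extended reals: (-inf) + (+inf) = +inf.\<close>
definition inf_add :: "ereal \<Rightarrow> ereal \<Rightarrow> ereal" where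
  "inf_add r s = (if r = \<infinity> \<or> s = \<infinity> then \<infinity> else r + s)"

definition inf_diff :: "ereal \<Rightarrow> ereal \<Rightarrow> ereal" where
  "inf_diff r s = Inf {ereal t | t. r \<le> inf_add s (ereal t)}"

definition scal :: "('x \<Rightarrow> 'z set) \<Rightarrow> ('z \<Rightarrow> real) \<Rightarrow> 'x \<Rightarrow> ereal" where
  "scal f zs x = (if f x = {} then \<infinity> else (INF z\<in>f x. ereal (- zs z)))"

definition scal_dir_deriv ::
  "('x::real_vector \<Rightarrow> 'z set) \<Rightarrow> ('z \<Rightarrow> real) \<Rightarrow> 'x \<Rightarrow> 'x \<Rightarrow> ereal" where
  "scal_dir_deriv f zs x u =
     (INF t\<in>{0::real<..}. ereal (1 / t) * inf_diff (scal f zs (x + t *\<^sub>R u)) (scal f zs x))"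

end

theory Submission
  imports Defs
begin

text \<open>If \<open>f x\<^sub>0 \<subseteq> f x\<close>, convexity propagates the inclusion along the segment:
  \<open>f x\<^sub>0 \<subseteq> f (x\<^sub>0 + t(x - x\<^sub>0))\<close> for \<open>0 < t < 1\<close>, so \<open>0\<close> lies in every difference
  set \<open>f (x\<^sub>0 + t(x - x\<^sub>0)) \<ominus> f x\<^sub>0\<close> and hence in \<open>f'(x\<^sub>0, x - x\<^sub>0)\<close>, contradicting (i)
  unless \<open>f x = f x\<^sub>0\<close>. Likewise every scalarization satisfies
  \<open>\<phi>(x) \<le> \<phi>(x\<^sub>0)\<close>, so already the difference quotient at \<open>t = 1\<close> is \<open>\<le> 0\<close>,
  contradicting (ii).\<close>

lemma sv_convex_subset_segment:
  assumes "sv_convex f" and "f a \<subseteq> f b" and "0 < t" "t < 1"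
  shows "f a \<subseteq> f (a + t *\<^sub>R (b - a))"
proof
  fix z assume z: "z \<in> f a"
  have "z = t *\<^sub>R z + (1 - t) *\<^sub>R z" by (simp add: algebra_simps)
  moreover have "t *\<^sub>R z \<in> Gscale t (f b)" "(1 - t) *\<^sub>R z \<in> Gscale (1 - t) (f a)"
    using z assms(2) unfolding Gscale_def by auto
  ultimately have "z \<in> setplus (Gscale t (f b)) (Gscale (1 - t) (f a))"
    unfolding setplus_def by blast
  hence "z \<in> Gplus (Gscale t (f b)) (Gscale (1 - t) (f a))"
    unfolding Gplus_def using closure_subset by blast
  also have "\<dots> \<subseteq> f (t *\<^sub>R b + (1 - t) *\<^sub>R a)"
    using assms(1,3,4) unfolding sv_convex_def by blast
  also have "t *\<^sub>R b + (1 - t) *\<^sub>R a = a + t *\<^sub>R (b - a)"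
    by (simp add: algebra_simps)
  finally show "z \<in> f (a + t *\<^sub>R (b - a))" .
qed

lemma zero_mem_sv_dir_deriv:
  assumes "sv_convex f" and "f a \<subseteq> f b"
  shows "0 \<in> sv_dir_deriv f a (b - a)"
  unfolding sv_dir_deriv_def
proof (rule INT_I)
  fix t0 :: real assume "t0 \<in> {0<..}"
  define t where "t = min (t0 / 2) (1 / 2)"
  have t: "0 < t" "t < 1" "t < t0" using \<open>t0 \<in> {0<..}\<close> unfolding t_def by auto
  have "0 \<in> Gminus (f (a + t *\<^sub>R (b - a))) (f a)"
    using sv_convex_subset_segment[OF assms t(1,2)] unfolding Gminus_def by auto
  hence "0 \<in> Gscale (1 / t) (Gminus (f (a + t *\<^sub>R (b - a))) (f a))"
    unfolding Gscale_def by force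
  with t have "0 \<in> (\<Union>s\<in>{0<..<t0}. Gscale (1 / s) (Gminus (f (a + s *\<^sub>R (b - a))) (f a)))"
    by auto
  then show "0 \<in> closure (convex hull
      (\<Union>s\<in>{0<..<t0}. Gscale (1 / s) (Gminus (f (a + s *\<^sub>R (b - a))) (f a))))"
    by (meson closure_subset hull_inc subsetD)
qed

lemma scal_antimono:
  assumes "f a \<subseteq> f b"
  shows "scal f zs b \<le> scal f zs a"
proof (cases "f a = {}")
  case False
  with assms have "f b \<noteq> {}" by blast
  with False show ?thesis
    unfolding scal_def using INF_superset_mono[OF assms order_refl] by simp
qed (simp add: scal_def)

lemma inf_diff_nonpos:
  assumes "r \<le> s"
  shows "inf_diff r s \<le> 0"
proof -
  have "r \<le> inf_add s (ereal 0)" using assms unfolding inf_add_def by auto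
  hence "inf_diff r s \<le> ereal 0" unfolding inf_diff_def by (blast intro: Inf_lower)
  thus ?thesis by (simp add: zero_ereal_def)
qed

lemma scal_dir_deriv_le_inf_diff:
  "scal_dir_deriv f zs a u \<le> inf_diff (scal f zs (a + u)) (scal f zs a)"
proof -
  have "scal_dir_deriv f zs a u \<le> ereal (1 / 1) * inf_diff (scal f zs (a + 1 *\<^sub>R u)) (scal f zs a)"
    unfolding scal_dir_deriv_def by (rule INF_lower) auto
  thus ?thesis by simp
qed

lemma scal_dir_deriv_nonpos:
  assumes "f a \<subseteq> f b"
  shows "scal_dir_deriv f zs a (b - a) \<le> 0"
  using scal_dir_deriv_le_inf_diff[of f zs a "b - a"]
    inf_diff_nonpos[OF scal_antimono[of f a b zs, OF assms]]
  by simp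

theorem mainTheorem3:
  fixes f :: "'x::real_vector \<Rightarrow> 'z::{real_vector,t2_space} set"
    and C :: "'z set" and x0 :: 'x
  assumes Z: "lc_tvs TYPE('z)"
    and C_closed: "closed C" and C_convex: "convex C" and C_cone: "cone C" and C0: "0 \<in> C"
    and C_polar: "negpolar C - {\<lambda>_. 0} \<noteq> {}"
    and fG: "\<forall>x. f x \<in> Gspace C"
    and fconv: "sv_convex f"
    and x0dom: "x0 \<in> sv_dom f"
    and hyp: "(f x0 = UNIV \<or> (\<forall>x\<in>sv_dom f. f x \<noteq> f x0 \<longrightarrow> 0 \<notin> sv_dir_deriv f x0 (x - x0)))
           \<or> (\<forall>x\<in>sv_dom f. f x0 \<noteq> f x \<longrightarrow>
                (\<exists>zs\<in>negpolar C - {\<lambda>_. 0}.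
                   (- \<infinity> = scal f zs x0 \<and> scal f zs x0 < scal f zs x)
                   \<or> 0 < scal_dir_deriv f zs x0 (x - x0)))"
  shows "\<forall>x. f x0 \<subseteq> f x \<longrightarrow> f x = f x0"
proof (intro allI impI, rule ccontr)
  fix x assume sub: "f x0 \<subseteq> f x" and ne: "f x \<noteq> f x0"
  have x_dom: "x \<in> sv_dom f" using x0dom sub unfolding sv_dom_def by auto
  have deriv: "0 \<in> sv_dir_deriv f x0 (x - x0)"
    using zero_mem_sv_dir_deriv[of f x0 x, OF fconv sub] .
  show False
    using hyp
  proof (elim disjE)
    assume "f x0 = UNIV"
    with sub ne show False by auto
  next
    assume "\<forall>x\<in>sv_dom f. f x \<noteq> f x0 \<longrightarrow> 0 \<notin> sv_dir_deriv f x0 (x - x0)"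
    with x_dom ne deriv show False by blast
  next
    assume "\<forall>x\<in>sv_dom f. f x0 \<noteq> f x \<longrightarrow> (\<exists>zs\<in>negpolar C - {\<lambda>_. 0}.
              (- \<infinity> = scal f zs x0 \<and> scal f zs x0 < scal f zs x)
              \<or> 0 < scal_dir_deriv f zs x0 (x - x0))"
    with x_dom ne obtain zs where
      "scal f zs x0 < scal f zs x \<or> 0 < scal_dir_deriv f zs x0 (x - x0)"
      by metis
    with scal_antimono[of f x0 x, OF sub] scal_dir_deriv_nonpos[of f x0 x, OF sub]
    show False
      by (meson not_less)
  qed
qed

end
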